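(* Fix $0<\epsilon<1$ and let $\lambda_n=\frac{1-\epsilon}{n}$. Then there exists a constant $\kappa'>0$ such that, with probability tending to $1$ as $n\to\infty$, every component of the random induced subgraph $\Gamma_n$ of $Q_2^n$ has at most $\kappa' n$ vertices.
   Context: $Q_2^n$ is the binary $n$-cube: vertex set $\mathbb{F}_2^n$, two vertices adjacent iff they differ in exactly one coordinate. $\Gamma_n$ is the subgraph of $Q_2^n$ induced by a random vertex set in which each vertex is included independently with probability $\lambda_n$. A component is a maximal connected induced subgraph. *)

theory Defs
  imports "HOL-Probability.Probability"
begin

definition cube :: "nat \<Rightarrow> bool list set" where
  "cube n = {x. length x = n}"

definition cube_adj :: "nat \<Rightarrow> bool list \<Rightarrow> bool list \<Rightarrow> bool" where
  "cube_adj n x y \<longleftrightarrow> x \<in> cube n \<and> y \<in> cube n \<and> card {i. i < n \<and> x ! i \<noteq> y ! i} = 1"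

definition induced_adj :: "nat \<Rightarrow> bool list set \<Rightarrow> bool list \<Rightarrow> bool list \<Rightarrow> bool" where
  "induced_adj n S x y \<longleftrightarrow> x \<in> S \<and> y \<in> S \<and> cube_adj n x y"

definition component :: "nat \<Rightarrow> bool list set \<Rightarrow> bool list \<Rightarrow> bool list set" where
  "component n S x = {y. (induced_adj n S)\<^sup>*\<^sup>* x y}"

definition components_bounded :: "nat \<Rightarrow> bool list set \<Rightarrow> real \<Rightarrow> bool" where
  "components_bounded n S b \<longleftrightarrow> (\<forall>x\<in>S. real (card (component n S x)) \<le> b)"

definition random_vertex_set :: "nat \<Rightarrow> real \<Rightarrow> bool list set pmf" where
  "random_vertex_set n p =
     map_pmf (\<lambda>f. {x \<in> cube n. f x}) (Pi_pmf (cube n) False (\<lambda>_. bernoulli_pmf p))"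

end

theory Submission
  imports Defs "HOL-Real_Asymp.Real_Asymp"
begin

text \<open>
  The proof explores the component of a vertex \<open>v\<close> by a depth-first search that queries
  vertices one at a time ("is this vertex in S?"), pushing the \<open>n\<close> neighbours of every
  vertex found in \<open>S\<close>.  Three facts about this exploration drive the argument:
  (1) the run is a deterministic function of its string of answers, and the queried vertices
      are distinct, so a fixed answer string \<open>a\<close> occurs with probability at most
      \<open>p^#true (1 - p)^#false\<close>;
  (2) if the component of \<open>v\<close> has more than \<open>m\<close> vertices, some prefix of the answer string
      has exactly \<open>m\<close> positive answers and length at most \<open>n (m + 1)\<close>, since each positive
      answer adds at most \<open>n\<close> entries to the stack;
  (3) the total weight of strings of length \<open>L\<close> with \<open>m\<close> positive answers is bounded by
      exponential tilting: \<open>\<le> t^-m (p t + 1 - p)^L\<close> for any \<open>t \<ge> 1\<close>.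
  A union bound over the \<open>2^n\<close> start vertices and the lengths then gives, with
  \<open>t = 1 / (1 - \<epsilon>)\<close>, the bound \<open>2^n (n (m + 1) + 1) ((1 - \<epsilon>) e^\<epsilon>)^m e^\<epsilon>\<close>.  Since
  \<open>(1 - \<epsilon>) e^\<epsilon> < 1\<close>, choosing \<open>m \<approx> \<kappa> n\<close> with \<open>((1 - \<epsilon>) e^\<epsilon>)^\<kappa> = 1/8\<close> makes this
  \<open>O(n^2 4^-n)\<close>, which proves the theorem.
\<close>


section \<open>The hypercube\<close>

lemma cube_as_lists: "cube n = {xs. set xs \<subseteq> UNIV \<and> length xs = n}"
  by (simp add: cube_def)

lemma finite_cube: "finite (cube n)"
  unfolding cube_as_lists by (rule finite_lists_length_eq) simp

lemma card_cube: "card (cube n) = 2 ^ n"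
  unfolding cube_as_lists by (subst card_lists_length_eq) simp_all

definition flip :: "bool list \<Rightarrow> nat \<Rightarrow> bool list" where
  "flip x i = x[i := \<not> x ! i]"

definition neighbours :: "nat \<Rightarrow> bool list \<Rightarrow> bool list list" where
  "neighbours n x = map (flip x) [0..<n]"

lemma length_neighbours [simp]: "length (neighbours n x) = n"
  by (simp add: neighbours_def)

lemma neighbours_in_cube: "x \<in> cube n \<Longrightarrow> set (neighbours n x) \<subseteq> cube n"
  by (auto simp: neighbours_def flip_def cube_def)

lemma cube_adj_neighbour:
  assumes "cube_adj n x y"
  shows "y \<in> set (neighbours n x)"
proof -
  from assms have x: "length x = n" and y: "length y = n"
    and card1: "card {i. i < n \<and> x ! i \<noteq> y ! i} = 1"
    by (auto simp: cube_adj_def cube_def)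
  from card1 obtain i where i: "{i. i < n \<and> x ! i \<noteq> y ! i} = {i}"
    by (auto simp: card_Suc_eq)
  hence "i < n" "x ! i \<noteq> y ! i" by auto
  have "y = flip x i"
    unfolding flip_def
  proof (rule nth_equalityI)
    show "length y = length (x[i := \<not> x ! i])" using x y by simp
    fix j assume "j < length y"
    thus "y ! j = x[i := \<not> x ! i] ! j"
      using i x y \<open>x ! i \<noteq> y ! i\<close> by (cases "j = i") auto
  qed
  thus ?thesis using \<open>i < n\<close> by (auto simp: neighbours_def)
qed

section \<open>Exploring a component\<close>

text \<open>A state of the exploration consists of a stack of vertices still to be examined, the set
  of vertices already queried, and the list of answers (membership in \<open>S\<close>) received so far.\<close>

type_synonym state = "bool list list \<times> bool list set \<times> bool list"

abbreviation stack :: "state \<Rightarrow> bool list list" where "stack st \<equiv> fst st"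
abbreviation visited :: "state \<Rightarrow> bool list set" where "visited st \<equiv> fst (snd st)"
abbreviation answers :: "state \<Rightarrow> bool list" where "answers st \<equiv> snd (snd st)"

definition pending :: "state \<Rightarrow> bool list list" where
  "pending st = dropWhile (\<lambda>y. y \<in> visited st) (stack st)"

definition halted :: "state \<Rightarrow> bool" where
  "halted st \<longleftrightarrow> pending st = []"

definition query :: "state \<Rightarrow> bool list" where
  "query st = hd (pending st)"

text \<open>The exploration from \<open>v\<close> (assumed to lie in \<open>S\<close>) starts with the neighbours of \<open>v\<close>.\<close>

definition explore_step :: "nat \<Rightarrow> bool list set \<Rightarrow> state \<Rightarrow> state" where
  "explore_step n S st =
     (if halted st then st
      else ((if query st \<in> S then neighbours n (query st) else []) @ tl (pending st),
            insert (query st) (visited st), answers st @ [query st \<in> S]))"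

definition explore :: "nat \<Rightarrow> bool list set \<Rightarrow> bool list \<Rightarrow> nat \<Rightarrow> state" where
  "explore n S v j = (explore_step n S ^^ j) (neighbours n v, {v}, [])"

lemma explore_0: "explore n S v 0 = (neighbours n v, {v}, [])"
  by (simp add: explore_def)

lemma explore_Suc: "explore n S v (Suc j) = explore_step n S (explore n S v j)"
  by (simp add: explore_def)

lemma pop_pending:
  assumes "\<not> halted st"
  shows "query st \<notin> visited st" "query st \<in> set (stack st)"
    "set (tl (pending st)) \<subseteq> set (stack st)"
    "set (stack st) \<subseteq> insert (query st) (visited st) \<union> set (tl (pending st))"
    "length (tl (pending st)) < length (stack st)"
proof -
  have pq: "pending st = query st # tl (pending st)"
    using assms by (simp add: halted_def query_def)
  hence set_pending: "set (pending st) = insert (query st) (set (tl (pending st)))"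
    by (cases "pending st") auto
  have sub: "set (pending st) \<subseteq> set (stack st)"
    unfolding pending_def by (auto dest: set_dropWhileD)
  have cover: "set (stack st) \<subseteq> visited st \<union> set (pending st)"
    unfolding pending_def
    by (metis Un_mono set_append set_takeWhileD subsetI takeWhile_dropWhile_id)
  show "query st \<notin> visited st"
    using pq unfolding pending_def by (metis dropWhile_eq_Cons_conv)
  show "query st \<in> set (stack st)" "set (tl (pending st)) \<subseteq> set (stack st)"
    using sub set_pending by auto
  show "set (stack st) \<subseteq> insert (query st) (visited st) \<union> set (tl (pending st))"
    using cover set_pending by auto
  have "length (pending st) \<le> length (stack st)"
    unfolding pending_def by (rule length_dropWhile_le)
  thus "length (tl (pending st)) < length (stack st)"
    using assms by (cases "pending st") (auto simp: halted_def)
qed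

lemma explore_step_active:
  "\<not> halted st \<Longrightarrow> explore_step n S st =
     ((if query st \<in> S then neighbours n (query st) else []) @ tl (pending st),
      insert (query st) (visited st), answers st @ [query st \<in> S])"
  unfolding explore_step_def by (simp only: if_False)

lemma answers_step:
  "answers (explore_step n S st) = (if halted st then answers st else answers st @ [query st \<in> S])"
  by (simp add: explore_step_def)

lemma visited_step:
  "visited (explore_step n S st) = (if halted st then visited st else insert (query st) (visited st))"
  by (simp add: explore_step_def)

abbreviation num_true :: "bool list \<Rightarrow> nat" where
  "num_true a \<equiv> length (filter (\<lambda>b. b) a)"

definition explore_inv :: "nat \<Rightarrow> bool list set \<Rightarrow> bool list \<Rightarrow> state \<Rightarrow> bool" where
  "explore_inv n S v st \<longleftrightarrow>
     set (stack st) \<subseteq> cube n \<and> visited st \<subseteq> cube n \<and> v \<in> visited st \<and> finite (visited st)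
   \<and> card (visited st) = length (answers st) + 1
   \<and> (v \<in> S \<longrightarrow> card (visited st \<inter> S) = num_true (answers st) + 1)
   \<and> (\<forall>z\<in>visited st \<inter> S. set (neighbours n z) \<subseteq> visited st \<union> set (stack st))
   \<and> length (stack st) + length (answers st) \<le> n * (num_true (answers st) + 1)"

lemma explore_inv_step:
  assumes inv: "explore_inv n S v st"
  shows "explore_inv n S v (explore_step n S st)"
proof (cases "halted st")
  case True thus ?thesis using inv by (simp add: explore_step_def)
next
  case False
  define y where "y = query st"
  define R where "R = tl (pending st)"
  define new where "new = (if y \<in> S then neighbours n y else []) @ R"
  note pop = pop_pending[OF False, folded y_def R_def]
  have step: "explore_step n S st = (new, insert y (visited st), answers st @ [y \<in> S])"
    unfolding new_def y_def R_def by (rule explore_step_active[OF False])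
  have y_cube: "y \<in> cube n" using inv pop(2) by (auto simp: explore_inv_def)
  have closed: "set (neighbours n z) \<subseteq> insert y (visited st) \<union> set new"
    if "z \<in> insert y (visited st) \<inter> S" for z
  proof (cases "z = y")
    case True thus ?thesis using that by (auto simp: new_def)
  next
    case False
    hence "set (neighbours n z) \<subseteq> visited st \<union> set (stack st)"
      using that inv by (auto simp: explore_inv_def)
    thus ?thesis using pop(4) by (auto simp: new_def)
  qed
  have card_S: "card (insert y (visited st) \<inter> S) = card (visited st \<inter> S) + (if y \<in> S then 1 else 0)"
    using inv pop(1) by (auto simp: explore_inv_def)
  have "length (stack st) + length (answers st) \<le> n * (num_true (answers st) + 1)"
    using inv by (simp add: explore_inv_def)
  hence len: "length new + length (answers st @ [y \<in> S]) \<le> n * (num_true (answers st @ [y \<in> S]) + 1)"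
    using pop(5) by (simp add: new_def algebra_simps)
  have "set new \<subseteq> cube n"
    using inv pop(3) neighbours_in_cube[OF y_cube] by (auto simp: explore_inv_def new_def)
  thus ?thesis
    unfolding step explore_inv_def prod.sel
    using inv y_cube pop(1) closed card_S len by (simp add: explore_inv_def)
qed

lemma explore_inv_holds: "v \<in> cube n \<Longrightarrow> explore_inv n S v (explore n S v j)"
proof (induction j)
  case 0 thus ?case by (auto simp: explore_0 explore_inv_def neighbours_in_cube)
next
  case (Suc j) thus ?case unfolding explore_Suc using explore_inv_step by blast
qed

section \<open>Answers determine the exploration\<close>

text \<open>The exploration is still running at time \<open>j\<close> if it has made a query in each of the
  first \<open>j\<close> steps.\<close>

definition running :: "nat \<Rightarrow> bool list set \<Rightarrow> bool list \<Rightarrow> nat \<Rightarrow> bool" where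
  "running n S v j \<longleftrightarrow> length (answers (explore n S v j)) = j"

lemma length_answers_le: "length (answers (explore n S v j)) \<le> j"
  by (induction j) (auto simp: explore_0 explore_Suc answers_step)

lemma running_Suc: "running n S v (Suc j) \<longleftrightarrow> running n S v j \<and> \<not> halted (explore n S v j)"
  using length_answers_le[of n S v j] by (auto simp: running_def explore_Suc answers_step)

lemma running_iff: "running n S v j \<longleftrightarrow> (\<forall>i<j. \<not> halted (explore n S v i))"
  by (induction j) (auto simp: running_Suc less_Suc_eq, simp add: running_def explore_0)

lemma answers_take:
  assumes "i \<le> j"
  shows "take (length (answers (explore n S v i))) (answers (explore n S v j)) = answers (explore n S v i)"
  using assms
proof (induction j rule: dec_induct)
  case base show ?case by simp
next
  case (step j)
  have "length (answers (explore n S v i)) \<le> length (answers (explore n S v j))"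
    using step.IH by (metis length_take min.bounded_iff nle_le)
  thus ?case using step.IH by (simp add: explore_Suc answers_step)
qed

lemma answers_take_running:
  "running n S v i \<Longrightarrow> i \<le> j \<Longrightarrow> answers (explore n S v i) = take i (answers (explore n S v j))"
  using answers_take[of i j n S v] by (simp add: running_def)

lemma answers_nth:
  assumes "running n S v j" "i < j"
  shows "answers (explore n S v j) ! i = (query (explore n S v i) \<in> S)"
proof -
  have run_i: "running n S v i" and run_Si: "running n S v (Suc i)"
    and active: "\<not> halted (explore n S v i)"
    using assms by (auto simp: running_iff)
  have "take (Suc i) (answers (explore n S v j)) = answers (explore n S v (Suc i))"
    using answers_take_running[OF run_Si Suc_leI[OF assms(2)]] by (rule sym)
  also have "\<dots> = answers (explore n S v i) @ [query (explore n S v i) \<in> S]"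
    using active by (simp add: explore_Suc answers_step)
  finally have take_eq: "take (Suc i) (answers (explore n S v j))
      = answers (explore n S v i) @ [query (explore n S v i) \<in> S]" .
  have "answers (explore n S v j) ! i = take (Suc i) (answers (explore n S v j)) ! i" by simp
  also have "\<dots> = (query (explore n S v i) \<in> S)"
    unfolding take_eq using run_i by (simp add: running_def nth_append)
  finally show ?thesis .
qed

lemma explore_determined:
  assumes "running n S v j" "answers (explore n S' v j) = answers (explore n S v j)"
  shows "explore n S' v j = explore n S v j"
  using assms
proof (induction j)
  case 0 show ?case by (simp add: explore_0)
next
  case (Suc j)
  let ?st = "explore n S v j"
  have run: "running n S v j" "\<not> halted ?st" using Suc.prems(1) by (simp_all add: running_Suc)
  have "running n S' v (Suc j)" using Suc.prems by (simp add: running_def)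
  hence "running n S' v j" by (simp add: running_Suc)
  hence "answers (explore n S' v j) = take j (answers (explore n S' v (Suc j)))"
    by (simp add: answers_take_running)
  also have "\<dots> = take j (answers (explore n S v (Suc j)))" using Suc.prems(2) by simp
  also have "\<dots> = answers ?st" using answers_take_running[OF run(1), of "Suc j"] by simp
  finally have "answers (explore n S' v j) = answers ?st" .
  hence same: "explore n S' v j = ?st" using Suc.IH run(1) by blast
  have "(query ?st \<in> S') = (query ?st \<in> S)"
    using Suc.prems(2) run(2) by (simp add: explore_Suc answers_step same)
  thus ?case using run(2) by (simp add: explore_Suc same explore_step_def)
qed

lemma answers_determine_queries:
  assumes "running n S0 v L" "answers (explore n S v L) = answers (explore n S0 v L)" "i < L"
  shows "(query (explore n S0 v i) \<in> S) = answers (explore n S0 v L) ! i"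
proof -
  have run: "running n S v L" using assms(1,2) by (simp add: running_def)
  have run_i: "running n S0 v i" using assms(1,3) by (simp add: running_iff)
  have "answers (explore n S v i) = take i (answers (explore n S v L))"
    using answers_take_running[of n S v i L] run assms(3) by (simp add: running_iff)
  also have "\<dots> = answers (explore n S0 v i)"
    using answers_take_running[OF run_i, of L] assms(2,3) by simp
  finally have "explore n S v i = explore n S0 v i" by (rule explore_determined[OF run_i])
  thus ?thesis using answers_nth[OF run assms(3)] assms(2) by simp
qed

lemma visited_mono: "i \<le> j \<Longrightarrow> visited (explore n S v i) \<subseteq> visited (explore n S v j)"
  by (induction j rule: dec_induct) (auto simp: explore_Suc visited_step)

lemma query_cube:
  assumes "v \<in> cube n" "\<not> halted (explore n S v i)"
  shows "query (explore n S v i) \<in> cube n"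
  using pop_pending(2)[OF assms(2)] explore_inv_holds[OF assms(1), of S i]
  by (auto simp: explore_inv_def)

lemma queries_distinct:
  assumes "running n S v j"
  shows "inj_on (\<lambda>i. query (explore n S v i)) {..<j}"
proof -
  have distinct: "query (explore n S v i) \<noteq> query (explore n S v i')" if "i < i'" "i' < j" for i i'
  proof -
    have "\<not> halted (explore n S v i)" "\<not> halted (explore n S v i')"
      using assms that unfolding running_iff by simp_all
    hence "query (explore n S v i) \<in> visited (explore n S v (Suc i))"
      and "query (explore n S v i') \<notin> visited (explore n S v i')"
      by (simp_all add: explore_Suc visited_step pop_pending(1))
    moreover have "visited (explore n S v (Suc i)) \<subseteq> visited (explore n S v i')"
      using that by (simp add: visited_mono)
    ultimately show ?thesis by auto
  qed
  show ?thesis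
  proof (rule inj_onI)
    fix i i' assume "i \<in> {..<j}" "i' \<in> {..<j}" "query (explore n S v i) = query (explore n S v i')"
    thus "i = i'" using distinct[of i i'] distinct[of i' i] by (cases i i' rule: linorder_cases) auto
  qed
qed

section \<open>Large components force long runs with few positive answers\<close>

text \<open>Each step visits a new cube vertex, so the exploration halts within \<open>2^n\<close> steps.\<close>

lemma exploration_halts:
  assumes "v \<in> cube n"
  shows "\<exists>j. running n S v j \<and> halted (explore n S v j)"
proof -
  have ex: "\<exists>j. halted (explore n S v j)"
  proof (rule ccontr)
    assume "\<nexists>j. halted (explore n S v j)"
    hence "running n S v (2 ^ n)" by (simp add: running_iff)
    hence "card (visited (explore n S v (2 ^ n))) = 2 ^ n + 1"
      using explore_inv_holds[OF assms, of S "2 ^ n"] by (simp add: explore_inv_def running_def)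
    moreover have "card (visited (explore n S v (2 ^ n))) \<le> card (cube n)"
      using explore_inv_holds[OF assms, of S "2 ^ n"] by (intro card_mono[OF finite_cube]) (simp add: explore_inv_def)
    ultimately show False by (simp add: card_cube)
  qed
  define j where "j = (LEAST j. halted (explore n S v j))"
  have "halted (explore n S v j)" unfolding j_def using ex by (rule LeastI_ex)
  moreover have "running n S v j"
    unfolding running_iff j_def by (auto dest: not_less_Least)
  ultimately show ?thesis by blast
qed

lemma component_in_visited:
  assumes "v \<in> cube n" "v \<in> S" "halted (explore n S v j)"
  shows "component n S v \<subseteq> visited (explore n S v j) \<inter> S"
proof -
  let ?st = "explore n S v j"
  have inv: "v \<in> visited ?st" "\<forall>z\<in>visited ?st \<inter> S. set (neighbours n z) \<subseteq> visited ?st \<union> set (stack ?st)"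
    using explore_inv_holds[OF assms(1), of S j] by (auto simp: explore_inv_def)
  have stack: "set (stack ?st) \<subseteq> visited ?st"
    using assms(3) unfolding halted_def pending_def by auto
  have "y \<in> visited ?st \<inter> S" if "(induced_adj n S)\<^sup>*\<^sup>* v y" for y
    using that
  proof (induction rule: rtranclp_induct)
    case base show ?case using inv(1) assms(2) by simp
  next
    case (step x y)
    hence "y \<in> S" "y \<in> set (neighbours n x)"
      by (auto simp: induced_adj_def cube_adj_neighbour)
    thus ?case using step.IH inv(2) stack by blast
  qed
  thus ?thesis by (auto simp: component_def)
qed

lemma num_true_take_intermediate:
  "m \<le> num_true a \<Longrightarrow> \<exists>k\<le>length a. num_true (take k a) = m"
proof (induction a arbitrary: m)
  case Nil thus ?case by simp
next
  case (Cons b a)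
  show ?case
  proof (cases "m = 0")
    case True thus ?thesis by (intro exI[of _ 0]) simp
  next
    case False
    have "(if b then m - 1 else m) \<le> num_true a" using Cons.prems False by (cases b) auto
    then obtain k where "k \<le> length a" "num_true (take k a) = (if b then m - 1 else m)"
      using Cons.IH by blast
    thus ?thesis using False by (intro exI[of _ "Suc k"]) (cases b, auto)
  qed
qed

text \<open>If the component of \<open>v\<close> has more than \<open>m\<close> vertices, then at some time the answers contain
  exactly \<open>m\<close> positive ones and, by the stack invariant, have length at most \<open>n (m + 1)\<close>.\<close>

lemma large_component_answers:
  assumes "v \<in> cube n" "v \<in> S" "m + 1 \<le> card (component n S v)"
  shows "\<exists>a. length a \<le> n * (m + 1) \<and> num_true a = m \<and> answers (explore n S v (length a)) = a"
proof -
  obtain j where run: "running n S v j" and halt: "halted (explore n S v j)"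
    using exploration_halts[OF assms(1)] by blast
  define A where "A = answers (explore n S v j)"
  have inv_j: "finite (visited (explore n S v j))"
      "card (visited (explore n S v j) \<inter> S) = num_true A + 1"
    using explore_inv_holds[OF assms(1), of S j] assms(2) by (auto simp: explore_inv_def A_def)
  have "card (component n S v) \<le> card (visited (explore n S v j) \<inter> S)"
    using component_in_visited[OF assms(1,2) halt] inv_j(1) by (intro card_mono) auto
  hence "card (component n S v) \<le> num_true A + 1" using inv_j(2) by simp
  then obtain k where k: "k \<le> j" "num_true (take k A) = m"
    using num_true_take_intermediate[of m A] assms(3) run by (auto simp: running_def A_def)
  have run_k: "running n S v k" using run k(1) by (auto simp: running_iff)
  hence ans_k: "answers (explore n S v k) = take k A"
    using answers_take_running k(1) by (simp add: A_def)
  have "k \<le> n * (m + 1)"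
    using explore_inv_holds[OF assms(1), of S k] run_k ans_k k(2) by (simp add: explore_inv_def running_def)
  thus ?thesis using ans_k k run_k by (intro exI[of _ "take k A"]) (simp add: running_def)
qed

lemma large_component_event:
  assumes "S \<subseteq> cube n" "\<not> components_bounded n S (real m)"
  shows "\<exists>v\<in>cube n. \<exists>a\<in>{a. length a \<le> n * (m + 1) \<and> num_true a = m}.
           answers (explore n S v (length a)) = a"
proof -
  obtain v where v: "v \<in> S" "m + 1 \<le> card (component n S v)"
    using assms(2) by (auto simp: components_bounded_def not_le)
  hence "v \<in> cube n" using assms(1) by auto
  thus ?thesis using large_component_answers[OF _ v] by blast
qed

section \<open>Weights of answer strings\<close>

definition string_weight :: "real \<Rightarrow> real \<Rightarrow> bool list \<Rightarrow> real" where
  "string_weight x y a = prod_list (map (\<lambda>b. if b then x else y) a)"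

lemma string_weight_Nil [simp]: "string_weight x y [] = 1"
  and string_weight_Cons [simp]: "string_weight x y (b # a) = (if b then x else y) * string_weight x y a"
  by (simp_all add: string_weight_def)

lemma string_weight_nonneg: "0 \<le> x \<Longrightarrow> 0 \<le> y \<Longrightarrow> 0 \<le> string_weight x y a"
  by (induction a) auto

lemma string_weight_nth: "string_weight x y a = (\<Prod>i<length a. if a ! i then x else y)"
  by (induction a) (simp_all add: prod.lessThan_Suc_shift del: prod.lessThan_Suc)

lemma string_weight_scale: "string_weight (x * t) y a = t ^ num_true a * string_weight x y a"
  by (induction a) (auto simp: algebra_simps)

lemma finite_strings: "finite {a :: bool list. length a = L}"
  using finite_cube[of L] by (simp add: cube_def)

lemma sum_string_weight: "(\<Sum>a | length a = L. string_weight x y a) = (x + y) ^ L"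
proof (induction L)
  case 0
  have "{a :: bool list. length a = 0} = {[]}" by auto
  thus ?case by simp
next
  case (Suc L)
  have strings: "{a :: bool list. length a = Suc L} = (\<lambda>(b, a). b # a) ` (UNIV \<times> {a. length a = L})"
    by (auto simp: length_Suc_conv)
  have inj: "inj_on (\<lambda>(b, a). b # a) (UNIV \<times> {a :: bool list. length a = L})"
    by (auto simp: inj_on_def)
  have "(\<Sum>a | length a = Suc L. string_weight x y a)
      = (\<Sum>b\<in>UNIV. \<Sum>a | length a = L. (if b then x else y) * string_weight x y a)"
    unfolding strings sum.reindex[OF inj] sum.cartesian_product by (simp add: case_prod_beta)
  also have "\<dots> = (x + y) ^ Suc L"
    by (simp add: UNIV_bool sum_distrib_left[symmetric] Suc.IH algebra_simps)
  finally show ?case .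
qed

text \<open>Exponential tilting: scaling the weight of a positive answer by \<open>t \<ge> 1\<close> bounds the weight of
  all strings with exactly \<open>m\<close> positive answers.\<close>

lemma sum_string_weight_num_true:
  assumes "0 \<le> x" "0 \<le> y" "1 \<le> t"
  shows "(\<Sum>a | length a = L \<and> num_true a = m. string_weight x y a) \<le> (1 / t) ^ m * (x * t + y) ^ L"
proof -
  have tilt: "string_weight x y a = (1 / t) ^ m * string_weight (x * t) y a" if "num_true a = m" for a
  proof -
    have "(1 / t) ^ m * string_weight (x * t) y a = ((1 / t) ^ m * t ^ m) * string_weight x y a"
      unfolding string_weight_scale that by (simp only: mult.assoc)
    also have "(1 / t) ^ m * t ^ m = 1" using assms(3) by (simp add: power_one_over)
    finally show ?thesis by simp
  qed
  have "(\<Sum>a | length a = L \<and> num_true a = m. string_weight x y a)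
      = (1 / t) ^ m * (\<Sum>a | length a = L \<and> num_true a = m. string_weight (x * t) y a)"
    unfolding sum_distrib_left using tilt by (intro sum.cong) auto
  also have "\<dots> \<le> (1 / t) ^ m * (\<Sum>a | length a = L. string_weight (x * t) y a)"
    using assms by (intro mult_left_mono sum_mono2 finite_strings string_weight_nonneg) auto
  also have "\<dots> = (1 / t) ^ m * (x * t + y) ^ L" by (simp add: sum_string_weight)
  finally show ?thesis .
qed

lemma sum_witness_weights:
  assumes "0 \<le> p" "p \<le> 1" "1 \<le> t"
  shows "(\<Sum>a | length a \<le> N \<and> num_true a = m. string_weight p (1 - p) a)
         \<le> real (N + 1) * ((1 / t) ^ m * (p * t + (1 - p)) ^ N)"
proof -
  have base: "1 \<le> p * t + (1 - p)" using assms mult_left_mono[of 1 t p] by simp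
  have "{a. length a \<le> N \<and> num_true a = m} = (\<Union>L\<le>N. {a. length a = L \<and> num_true a = m})"
    by auto
  hence "(\<Sum>a | length a \<le> N \<and> num_true a = m. string_weight p (1 - p) a)
      = (\<Sum>L\<le>N. \<Sum>a | length a = L \<and> num_true a = m. string_weight p (1 - p) a)"
    by (simp only:) (rule sum.UNION_disjoint, auto intro: finite_subset[OF _ finite_strings])
  also have "\<dots> \<le> (\<Sum>L\<le>N. (1 / t) ^ m * (p * t + (1 - p)) ^ N)"
  proof (rule sum_mono)
    fix L assume "L \<in> {..N}"
    have "(\<Sum>a | length a = L \<and> num_true a = m. string_weight p (1 - p) a)
        \<le> (1 / t) ^ m * (p * t + (1 - p)) ^ L"
      using assms by (intro sum_string_weight_num_true) auto
    also have "\<dots> \<le> (1 / t) ^ m * (p * t + (1 - p)) ^ N"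
      using \<open>L \<in> {..N}\<close> base assms(3) by (intro mult_left_mono power_increasing) auto
    finally show "(\<Sum>a | length a = L \<and> num_true a = m. string_weight p (1 - p) a)
        \<le> (1 / t) ^ m * (p * t + (1 - p)) ^ N" .
  qed
  also have "\<dots> = real (N + 1) * ((1 / t) ^ m * (p * t + (1 - p)) ^ N)" by simp
  finally show ?thesis .
qed

section \<open>Probability bounds\<close>

text \<open>In the random vertex set, membership of distinct vertices is independent, so prescribing
  it on \<open>|I|\<close> vertices has probability \<open>p^#yes (1 - p)^#no\<close>.\<close>

lemma prob_prescribed_membership:
  assumes q: "inj_on q I" "finite I" "q ` I \<subseteq> cube n" and p: "0 \<le> p" "p \<le> 1"
  shows "measure_pmf.prob (random_vertex_set n p) {S. \<forall>i\<in>I. (q i \<in> S) = g i}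
         = (\<Prod>i\<in>I. if g i then p else 1 - p)"
proof -
  define B where "B x = (if x \<in> q ` I then {g (inv_into I q x)} else UNIV)" for x
  have preimage: "(\<lambda>f. {x \<in> cube n. f x}) -` {S. \<forall>i\<in>I. (q i \<in> S) = g i} = Pi (cube n) B"
    using q by (auto simp: B_def Pi_def)
  have bernoulli: "measure_pmf.prob (bernoulli_pmf p) (B x)
      = (if x \<in> q ` I then (if g (inv_into I q x) then p else 1 - p) else 1)" for x
    using p by (simp add: B_def measure_pmf_single)
  have "measure_pmf.prob (random_vertex_set n p) {S. \<forall>i\<in>I. (q i \<in> S) = g i}
      = (\<Prod>x\<in>cube n. measure_pmf.prob (bernoulli_pmf p) (B x))"
    unfolding random_vertex_set_def measure_map_pmf preimage
    by (rule measure_Pi_pmf_Pi[OF finite_cube])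
  also have "\<dots> = (\<Prod>x\<in>q ` I. if g (inv_into I q x) then p else 1 - p)"
    unfolding bernoulli prod.inter_restrict[OF finite_cube, symmetric] using q(3)
    by (simp add: Int_absorb1)
  also have "\<dots> = (\<Prod>i\<in>I. if g i then p else 1 - p)"
    using q(1) by (simp add: prod.reindex)
  finally show ?thesis .
qed

lemma prob_answers:
  assumes "v \<in> cube n" "0 \<le> p" "p \<le> 1"
  shows "measure_pmf.prob (random_vertex_set n p) {S. answers (explore n S v (length a)) = a}
         \<le> string_weight p (1 - p) a"
proof (cases "\<exists>S0. answers (explore n S0 v (length a)) = a")
  case False
  thus ?thesis using assms by (simp add: string_weight_nonneg)
next
  case True
  then obtain S0 where S0: "answers (explore n S0 v (length a)) = a" ..
  define L where "L = length a"
  define q where "q i = query (explore n S0 v i)" for i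
  have run: "running n S0 v L" using S0 by (simp add: running_def L_def)
  have "{S. answers (explore n S v L) = a} \<subseteq> {S. \<forall>i\<in>{..<L}. (q i \<in> S) = a ! i}"
    using answers_determine_queries[OF run] S0 by (auto simp: q_def L_def)
  hence "measure_pmf.prob (random_vertex_set n p) {S. answers (explore n S v L) = a}
      \<le> measure_pmf.prob (random_vertex_set n p) {S. \<forall>i\<in>{..<L}. (q i \<in> S) = a ! i}"
    by (rule measure_pmf.finite_measure_mono) simp
  also have "\<dots> = (\<Prod>i<L. if a ! i then p else 1 - p)"
    using queries_distinct[OF run] query_cube[OF assms(1)] run assms(2,3)
    by (intro prob_prescribed_membership) (auto simp: q_def running_iff)
  also have "\<dots> = string_weight p (1 - p) a" by (simp add: string_weight_nth L_def)
  finally show ?thesis by (simp add: L_def)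
qed

lemma prob_large_component:
  assumes p: "0 \<le> p" "p \<le> 1" and t: "1 \<le> t"
  shows "measure_pmf.prob (random_vertex_set n p) {S. \<not> components_bounded n S (real m)}
     \<le> 2 ^ n * (real (n * (m + 1) + 1) * ((1 / t) ^ m * (p * t + (1 - p)) ^ (n * (m + 1))))"
proof -
  define M where "M = random_vertex_set n p"
  define W where "W = {a. length a \<le> n * (m + 1) \<and> num_true a = m}"
  define E where "E v a = {S. answers (explore n S v (length a)) = a}" for v a
  have finite_W: "finite W"
    unfolding W_def by (rule finite_subset[of _ "\<Union>L\<le>n * (m + 1). {a. length a = L}"])
      (auto intro: finite_strings)
  have support: "S \<subseteq> cube n" if "S \<in> set_pmf M" for S
    using that by (auto simp: M_def random_vertex_set_def)
  have "measure_pmf.prob M {S. \<not> components_bounded n S (real m)}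
      \<le> measure_pmf.prob M (\<Union>v\<in>cube n. \<Union>a\<in>W. E v a)"
    using large_component_event support unfolding W_def E_def
    by (intro measure_pmf.finite_measure_mono_AE) (auto simp: AE_measure_pmf_iff)
  also have "\<dots> \<le> (\<Sum>v\<in>cube n. measure_pmf.prob M (\<Union>a\<in>W. E v a))"
    by (rule measure_pmf.finite_measure_subadditive_finite[OF finite_cube]) simp
  also have "\<dots> \<le> (\<Sum>v\<in>cube n. \<Sum>a\<in>W. string_weight p (1 - p) a)"
  proof (rule sum_mono)
    fix v assume v: "v \<in> cube n"
    have "measure_pmf.prob M (\<Union>a\<in>W. E v a) \<le> (\<Sum>a\<in>W. measure_pmf.prob M (E v a))"
      by (rule measure_pmf.finite_measure_subadditive_finite[OF finite_W]) simp
    also have "\<dots> \<le> (\<Sum>a\<in>W. string_weight p (1 - p) a)"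
      unfolding M_def E_def by (intro sum_mono prob_answers[OF v p])
    finally show "measure_pmf.prob M (\<Union>a\<in>W. E v a) \<le> (\<Sum>a\<in>W. string_weight p (1 - p) a)" .
  qed
  also have "\<dots> \<le> 2 ^ n * (real (n * (m + 1) + 1) * ((1 / t) ^ m * (p * t + (1 - p)) ^ (n * (m + 1))))"
    using sum_witness_weights[OF p t, of "n * (m + 1)" m] by (simp add: W_def card_cube)
  finally show ?thesis by (simp add: M_def)
qed

section \<open>The subcritical regime\<close>

lemma components_bounded_mono:
  "components_bounded n S b \<Longrightarrow> b \<le> b' \<Longrightarrow> components_bounded n S b'"
  by (auto simp: components_bounded_def)

lemma one_plus_power_le_exp:
  fixes y :: real
  assumes "0 \<le> 1 + y"
  shows "(1 + y) ^ k \<le> exp (real k * y)"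
proof -
  have "(1 + y) ^ k \<le> exp y ^ k" using assms by (intro power_mono) (simp_all add: add.commute)
  thus ?thesis by (simp add: exp_of_nat_mult)
qed

lemma subcritical_rate:
  fixes \<epsilon> :: real
  assumes "0 < \<epsilon>" "\<epsilon> < 1"
  shows "0 < (1 - \<epsilon>) * exp \<epsilon>" "(1 - \<epsilon>) * exp \<epsilon> < 1"
proof -
  show "0 < (1 - \<epsilon>) * exp \<epsilon>" using assms by simp
  have "(1 - \<epsilon>) * exp \<epsilon> < exp (- \<epsilon>) * exp \<epsilon>"
    using assms exp_minus_greater[of \<epsilon>] by (intro mult_strict_right_mono) auto
  thus "(1 - \<epsilon>) * exp \<epsilon> < 1" by (simp add: exp_minus field_simps)
qed

text \<open>With \<open>p = (1 - \<epsilon>) / n\<close> and \<open>t = 1 / (1 - \<epsilon>)\<close> the tilted bound becomes \<open>((1 - \<epsilon>) e^\<epsilon>)^m e^\<epsilon>\<close>.\<close>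

lemma prob_large_component_subcritical:
  fixes \<epsilon> :: real
  assumes "0 < \<epsilon>" "\<epsilon> < 1" "1 \<le> n"
  shows "measure_pmf.prob (random_vertex_set n ((1 - \<epsilon>) / real n)) {S. \<not> components_bounded n S (real m)}
     \<le> 2 ^ n * (real (n * (m + 1) + 1) * (((1 - \<epsilon>) * exp \<epsilon>) ^ m * exp \<epsilon>))"
proof -
  define p where "p = (1 - \<epsilon>) / real n"
  define t where "t = 1 / (1 - \<epsilon>)"
  have p: "0 \<le> p" "p \<le> 1" and t: "1 \<le> t" using assms by (auto simp: p_def t_def field_simps)
  have drift: "p * t + (1 - p) = 1 + \<epsilon> / real n" using assms by (simp add: p_def t_def field_simps)
  have "(1 + \<epsilon> / real n) ^ (n * (m + 1)) \<le> exp (real (n * (m + 1)) * (\<epsilon> / real n))"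
    using assms by (intro one_plus_power_le_exp) simp
  also have "\<dots> = exp \<epsilon> ^ m * exp \<epsilon>"
    using assms by (simp add: exp_of_nat_mult[symmetric] exp_add[symmetric] field_simps)
  finally have "(1 / t) ^ m * (p * t + (1 - p)) ^ (n * (m + 1)) \<le> ((1 - \<epsilon>) * exp \<epsilon>) ^ m * exp \<epsilon>"
    unfolding drift using assms by (simp add: t_def power_mult_distrib mult_left_mono)
  hence "2 ^ n * (real (n * (m + 1) + 1) * ((1 / t) ^ m * (p * t + (1 - p)) ^ (n * (m + 1))))
      \<le> 2 ^ n * (real (n * (m + 1) + 1) * (((1 - \<epsilon>) * exp \<epsilon>) ^ m * exp \<epsilon>))"
    by (intro mult_left_mono) auto
  thus ?thesis using prob_large_component[OF p t, of n m] unfolding p_def by linarith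
qed

text \<open>Choosing the threshold \<open>m = \<lfloor>\<kappa> n\<rfloor>\<close> with \<open>q^\<kappa> = 1/8\<close> leaves a failure probability of order \<open>n^2 4^-n\<close>.\<close>

lemma prob_large_component_linear:
  fixes \<epsilon> \<kappa> q :: real
  assumes \<epsilon>: "0 < \<epsilon>" "\<epsilon> < 1" and q: "q = (1 - \<epsilon>) * exp \<epsilon>"
    and \<kappa>: "0 < \<kappa>" "q powr \<kappa> = 1 / 8" and n: "1 \<le> n"
  shows "measure_pmf.prob (random_vertex_set n ((1 - \<epsilon>) / real n)) {S. \<not> components_bounded n S (\<kappa> * real n)}
     \<le> exp \<epsilon> / q * (real n * (\<kappa> * real n + 1) + 1) / 4 ^ n"
proof -
  define m where "m = nat \<lfloor>\<kappa> * real n\<rfloor>"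
  have m: "real m \<le> \<kappa> * real n" "\<kappa> * real n - 1 \<le> real m" using \<kappa> by (simp_all add: m_def)
  have q_pos: "0 < q" "q < 1" using subcritical_rate[OF \<epsilon>] q by simp_all
  have "q ^ m = q powr real m" using q_pos by (simp add: powr_realpow)
  also have "\<dots> \<le> q powr (\<kappa> * real n - 1)" using q_pos m(2) by (intro powr_mono') auto
  also have "\<dots> = (q powr \<kappa>) powr real n / q"
    using q_pos by (simp add: powr_diff powr_powr)
  also have "\<dots> = (1 / 8) ^ n / q" by (simp add: \<kappa>(2) powr_realpow)
  finally have q_power: "q ^ m \<le> (1 / 8) ^ n / q" .
  have size: "real (n * (m + 1) + 1) \<le> real n * (\<kappa> * real n + 1) + 1"
    using mult_right_mono[OF m(1), of "real n"] by (simp add: algebra_simps)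
  have "measure_pmf.prob (random_vertex_set n ((1 - \<epsilon>) / real n)) {S. \<not> components_bounded n S (\<kappa> * real n)}
      \<le> measure_pmf.prob (random_vertex_set n ((1 - \<epsilon>) / real n)) {S. \<not> components_bounded n S (real m)}"
    using components_bounded_mono[OF _ m(1)] by (intro measure_pmf.finite_measure_mono) auto
  also have "\<dots> \<le> 2 ^ n * (real (n * (m + 1) + 1) * (q ^ m * exp \<epsilon>))"
    using prob_large_component_subcritical[OF \<epsilon> n] q by simp
  also have "\<dots> \<le> 2 ^ n * ((real n * (\<kappa> * real n + 1) + 1) * ((1 / 8) ^ n / q * exp \<epsilon>))"
    using q_power size q_pos \<kappa>(1) by (intro mult_left_mono mult_mono mult_right_mono) auto
  also have "\<dots> = exp \<epsilon> / q * (real n * (\<kappa> * real n + 1) + 1) * (2 ^ n * (1 / 8) ^ n)"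
    by (simp add: field_simps)
  also have "(2::real) ^ n * (1 / 8) ^ n = 1 / 4 ^ n"
    unfolding power_mult_distrib[symmetric] by (simp add: power_one_over)
  finally show ?thesis by simp
qed

lemma powr_hits_value:
  fixes q c :: real
  assumes "0 < q" "q < 1" "0 < c" "c < 1"
  shows "\<exists>\<kappa>>0. q powr \<kappa> = c"
proof (intro exI conjI)
  have "ln q < 0" "ln c < 0" using assms by simp_all
  thus "0 < ln c / ln q" by (simp add: divide_neg_neg)
  show "q powr (ln c / ln q) = c" using \<open>ln q < 0\<close> assms by (simp add: powr_def)
qed

lemma prob_components_bounded_compl:
  "measure_pmf.prob M {S. components_bounded n S b}
     = 1 - measure_pmf.prob M {S. \<not> components_bounded n S b}"
proof -
  have "{S. components_bounded n S b} = UNIV - {S. \<not> components_bounded n S b}" by auto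
  thus ?thesis using measure_pmf.prob_compl by simp
qed

theorem mainTheorem3:
  fixes \<epsilon> :: real
  assumes "0 < \<epsilon>" and "\<epsilon> < 1"
  shows "\<exists>\<kappa>'>0. (\<lambda>n. measure_pmf.prob (random_vertex_set n ((1 - \<epsilon>) / real n))
                     {S. components_bounded n S (\<kappa>' * real n)}) \<longlonglongrightarrow> 1"
proof -
  define q where "q = (1 - \<epsilon>) * exp \<epsilon>"
  have "0 < q" "q < 1" using subcritical_rate[OF assms] by (simp_all add: q_def)
  then obtain \<kappa> where \<kappa>: "0 < \<kappa>" "q powr \<kappa> = 1 / 8"
    using powr_hits_value[of q "1 / 8"] by auto
  define P where "P n = measure_pmf.prob (random_vertex_set n ((1 - \<epsilon>) / real n))
                         {S. components_bounded n S (\<kappa> * real n)}" for n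
  define C where "C n = exp \<epsilon> / q * (real n * (\<kappa> * real n + 1) + 1) / 4 ^ n" for n :: nat
  have "1 - C n \<le> P n" if "1 \<le> n" for n
    using prob_large_component_linear[OF assms q_def \<kappa> that]
    by (simp add: P_def C_def prob_components_bounded_compl)
  moreover have "(\<lambda>n. 1 - C n) \<longlonglongrightarrow> 1" unfolding C_def by real_asymp
  ultimately have "P \<longlonglongrightarrow> 1"
    by (intro tendsto_sandwich[of "\<lambda>n. 1 - C n" P sequentially "\<lambda>_. 1"] eventually_sequentiallyI[of 1])
       (auto simp: P_def)
  thus ?thesis using \<kappa>(1) unfolding P_def by blast
qed

end
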